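(* Let $n\ge2$ and let $X_1,\ldots,X_n$ be independent and identically distributed random vectors in $\mathbb{R}^n$ such that $X_1,\ldots,X_{n-1}$ are linearly independent almost surely. Let $$Y=\frac{\wedge(X_1,\ldots,X_{n-1})}{\|\wedge(X_1,\ldots,X_{n-1})\|_\infty}.$$ Then $$\liminf_{\epsilon\to0^+}\frac{\mathbb{P}\big(|X_n\cdot Y|<\epsilon\big)}{\epsilon}>0\qquad\text{and}\qquad \mathbb{E}\left[\frac{1}{|X_n\cdot Y|}\right]=+\infty.$$
   Context: The generalized cross product $\wedge:(\mathbb{R}^n)^{n-1}\to\mathbb{R}^n$ is defined by the formal determinant $$\wedge(x_1,\ldots,x_{n-1})=\det\begin{bmatrix}\mathbf e_1&\cdots&\mathbf e_n\\ x_1(1)&\cdots&x_1(n)\\ \vdots&&\vdots\\ x_{n-1}(1)&\cdots&x_{n-1}(n)\end{bmatrix},$$ where $\mathbf e_i$ is the $i$-th canonical basis vector; it is orthogonal to $x_1,\ldots,x_{n-1}$ and is zero iff they are linearly dependent. $\|v\|_\infty=\max_i|v(i)|$ and $\cdot$ is the Euclidean inner product. *)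

theory Defs
  imports "HOL-Probability.Probability"
begin

text \<open>Vectors in R^n are represented as functions nat => real, meaningful on {..<n}
  (index i in the paper corresponds to i-1 here).\<close>

definition vdot :: "nat \<Rightarrow> (nat \<Rightarrow> real) \<Rightarrow> (nat \<Rightarrow> real) \<Rightarrow> real" where
  "vdot n x y = (\<Sum>j<n. x j * y j)"

definition supnorm :: "nat \<Rightarrow> (nat \<Rightarrow> real) \<Rightarrow> real" where
  "supnorm n v = Max ((\<lambda>j. \<bar>v j\<bar>) ` {..<n})"

text \<open>Generalized cross product of x 0, ..., x (n-2) in R^n: the formal determinant whose
  first row is (e_1,...,e_n) and whose row k+2 is x k; component j is the Leibniz expansion
  with e_j in the first row replaced by the indicator of column j.\<close>

definition gen_cross :: "nat \<Rightarrow> (nat \<Rightarrow> nat \<Rightarrow> real) \<Rightarrow> nat \<Rightarrow> real" where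
  "gen_cross n x = (\<lambda>j. if j < n then
      (\<Sum>p | p permutes {..<n}. of_int (sign p) *
          (\<Prod>i<n. (if i = 0 then (if p i = j then 1 else 0) else x (i - 1) (p i))))
    else 0)"

definition lin_indep_vecs :: "nat \<Rightarrow> nat \<Rightarrow> (nat \<Rightarrow> nat \<Rightarrow> real) \<Rightarrow> bool" where
  "lin_indep_vecs n m x \<longleftrightarrow>
     (\<forall>c::nat \<Rightarrow> real. (\<forall>j<n. (\<Sum>i<m. c i * x i j) = 0) \<longrightarrow> (\<forall>i<m. c i = 0))"

end

theory Submission
  imports Defs "Jordan_Normal_Form.Determinant"
begin

text \<open>Write \<open>D(u, w) = det(u, w, X\<^sub>2, \<dots>, X\<^bsub>n-1\<^esub>)\<close>, so that the \<open>j\<close>-th entry of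
  \<open>\<and>(X\<^sub>1, \<dots>, X\<^bsub>n-1\<^esub>)\<close> is \<open>D(e\<^sub>j, X\<^sub>1)\<close> and \<open>X\<^sub>n \<cdot> \<and>(X\<^sub>1, \<dots>, X\<^bsub>n-1\<^esub>) = D(X\<^sub>n, X\<^sub>1)\<close>.
  The form \<open>D\<close> is decomposable, so it satisfies the Pluecker relation
  \<open>D(e\<^sub>j, e\<^sub>k) D(X\<^sub>n, X\<^sub>1) = D(e\<^sub>k, X\<^sub>1) D(e\<^sub>j, X\<^sub>n) - D(e\<^sub>j, X\<^sub>1) D(e\<^sub>k, X\<^sub>n)\<close>.
  Hence, if the minor \<open>D(e\<^sub>j, e\<^sub>k)\<close> is bounded away from \<open>0\<close> and the pairs
  \<open>(D(e\<^sub>j, X\<^sub>1), D(e\<^sub>k, X\<^sub>1))\<close> and \<open>(D(e\<^sub>j, X\<^sub>n), D(e\<^sub>k, X\<^sub>n))\<close> point in directions that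
  are \<open>\<delta>\<close>-close, then \<open>|X\<^sub>n \<cdot> Y| = O(\<delta>)\<close>. Conditionally on \<open>X\<^sub>2, \<dots>, X\<^bsub>n-1\<^esub>\<close>, the vectors
  \<open>X\<^sub>1\<close> and \<open>X\<^sub>n\<close> are independent with the same law, so by Cauchy-Schwarz they fall
  into the same one of \<open>O(1/\<delta>)\<close> direction bins with probability \<open>\<ge> c \<delta>\<close>. This gives
  \<open>P(|X\<^sub>n \<cdot> Y| < \<epsilon>) \<ge> c \<epsilon>\<close>, and summing over dyadic scales \<open>\<epsilon> = 2\<^bsup>-k\<^esup>\<close> makes
  \<open>E[1 / |X\<^sub>n \<cdot> Y|]\<close> diverge.\<close>

definition det_rows :: "nat \<Rightarrow> (nat \<Rightarrow> nat \<Rightarrow> real) \<Rightarrow> real" where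
  "det_rows n r = (\<Sum>p | p permutes {..<n}. of_int (sign p) * (\<Prod>i<n. r i (p i)))"

definition unit_vec :: "nat \<Rightarrow> nat \<Rightarrow> real" where
  "unit_vec c = (\<lambda>l. if l = c then 1 else 0)"

lemma det_rows_eq_det: "det_rows n r = Determinant.det (mat n n (\<lambda>(i, j). r i j))"
  unfolding det_rows_def Determinant.det_def
  by (auto simp: atLeast0LessThan intro!: sum.cong prod.cong dest: permutes_in_image)

lemma det_rows_cong:
  assumes "\<And>i c. i < n \<Longrightarrow> c < n \<Longrightarrow> r i c = r' i c"
  shows "det_rows n r = det_rows n r'"
  unfolding det_rows_def
proof (intro sum.cong prod.cong arg_cong2[where f = "(*)"] refl)
  fix p i assume "p \<in> {p. p permutes {..<n}}" "i \<in> {..<n}"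
  then show "r i (p i) = r' i (p i)"
    using assms permutes_in_image[of p "{..<n}" i] by auto
qed

lemma det_rows_identical_rows:
  assumes "i < n" "j < n" "i \<noteq> j" "\<And>c. c < n \<Longrightarrow> r i c = r j c"
  shows "det_rows n r = 0"
  unfolding det_rows_eq_det
  by (rule det_identical_rows[of _ n i j]) (use assms in \<open>auto intro!: eq_vecI\<close>)

lemma det_rows_swap:
  assumes "i < n" "j < n" "i \<noteq> j"
  shows "det_rows n (r(i := r j, j := r i)) = - det_rows n r"
proof -
  have swap: "swaprows i j (mat n n (\<lambda>(a, b). r a b)) = mat n n (\<lambda>(a, b). (r(i := r j, j := r i)) a b)"
    using assms unfolding mat_swaprows_def by (auto intro!: eq_matI)
  have "det_rows n (r(i := r j, j := r i)) = Determinant.det (swaprows i j (mat n n (\<lambda>(a, b). r a b)))"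
    unfolding det_rows_eq_det by (simp only: swap)
  also have "\<dots> = - det_rows n r"
    unfolding det_rows_eq_det by (rule det_swaprows[OF assms]) auto
  finally show ?thesis .
qed

lemma det_rows_linear_row:
  assumes "i < n"
  shows "det_rows n (r(i := v)) = (\<Sum>c<n. v c * det_rows n (r(i := unit_vec c)))"
proof -
  let ?rest = "\<lambda>p. of_int (sign p) * (\<Prod>k\<in>{..<n}-{i}. r k (p k))"
  have split: "(\<Prod>k<n. (r(i := w)) k (p k)) = w (p i) * (\<Prod>k\<in>{..<n}-{i}. r k (p k))" for w p
    using assms by (subst prod.remove[of _ i]) (auto intro!: prod.cong)
  have "(\<Sum>c<n. v c * det_rows n (r(i := unit_vec c)))
      = (\<Sum>c<n. \<Sum>p | p permutes {..<n}. v c * unit_vec c (p i) * ?rest p)"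
    unfolding det_rows_def split by (simp add: sum_distrib_left algebra_simps)
  also have "\<dots> = (\<Sum>p | p permutes {..<n}. \<Sum>c<n. v c * unit_vec c (p i) * ?rest p)"
    by (rule sum.swap)
  also have "\<dots> = (\<Sum>p | p permutes {..<n}. v (p i) * ?rest p)"
  proof (rule sum.cong[OF refl])
    fix p assume "p \<in> {p. p permutes {..<n}}"
    then have "p i < n"
      using assms by (auto dest: permutes_in_image)
    have "v c * unit_vec c (p i) = (if p i = c then v c else 0)" for c
      unfolding unit_vec_def by auto
    then show "(\<Sum>c<n. v c * unit_vec c (p i) * ?rest p) = v (p i) * ?rest p"
      using \<open>p i < n\<close> by (simp add: sum_distrib_right[symmetric])
  qed
  also have "\<dots> = det_rows n (r(i := v))"
    unfolding det_rows_def split by (simp add: algebra_simps)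
  finally show ?thesis by simp
qed

lemma det_rows_kernel_trivial:
  assumes "det_rows n R \<noteq> 0" and "\<And>i. i < n \<Longrightarrow> (\<Sum>l<n. R i l * G l) = 0" and "l < n"
  shows "G l = 0"
proof -
  let ?M = "mat n n (\<lambda>(i, j). R i j)"
  have "?M *\<^sub>v vec n G = 0\<^sub>v n"
    using assms(2) by (auto simp: mult_mat_vec_def scalar_prod_def atLeast0LessThan intro!: eq_vecI)
  then have "vec n G = 0\<^sub>v n"
    using assms(1) det_0_iff_vec_prod_zero[of ?M n] by (metis det_rows_eq_det mat_carrier vec_carrier)
  then show ?thesis
    using assms(3) by (metis index_vec index_zero_vec(1))
qed

lemma det_rows_measurable:
  assumes "\<And>i c. i < n \<Longrightarrow> c < n \<Longrightarrow> (\<lambda>w. r w i c) \<in> borel_measurable K"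
  shows "(\<lambda>w. det_rows n (r w)) \<in> borel_measurable K"
  unfolding det_rows_def
proof (intro borel_measurable_sum borel_measurable_times borel_measurable_const borel_measurable_prod)
  fix p i assume "p \<in> {p. p permutes {..<n}}" "i \<in> {..<n}"
  then show "(\<lambda>w. r w i (p i)) \<in> borel_measurable K"
    using assms permutes_in_image[of p "{..<n}" i] by auto
qed

definition cross_rows :: "(nat \<Rightarrow> nat \<Rightarrow> real) \<Rightarrow> (nat \<Rightarrow> real) \<Rightarrow> (nat \<Rightarrow> real) \<Rightarrow> nat \<Rightarrow> nat \<Rightarrow> real" where
  "cross_rows x u w = (\<lambda>i. if i = 0 then u else if i = 1 then w else x (i - 1))"

definition cross_form :: "nat \<Rightarrow> (nat \<Rightarrow> nat \<Rightarrow> real) \<Rightarrow> (nat \<Rightarrow> real) \<Rightarrow> (nat \<Rightarrow> real) \<Rightarrow> real" where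
  "cross_form n x u w = det_rows n (cross_rows x u w)"

lemma cross_form_linear_left:
  assumes "0 < n"
  shows "cross_form n x v w = (\<Sum>c<n. v c * cross_form n x (unit_vec c) w)"
proof -
  have "\<And>u. (cross_rows x v w)(0 := u) = cross_rows x u w"
    unfolding cross_rows_def by auto
  then show ?thesis
    unfolding cross_form_def using det_rows_linear_row[OF assms, of "cross_rows x v w" v] by simp
qed

lemma cross_form_linear_right:
  assumes "1 < n"
  shows "cross_form n x u v = (\<Sum>c<n. v c * cross_form n x u (unit_vec c))"
proof -
  have "\<And>w. (cross_rows x u v)(1 := w) = cross_rows x u w"
    unfolding cross_rows_def by auto
  then show ?thesis
    unfolding cross_form_def using det_rows_linear_row[OF assms, of "cross_rows x u v" v] by simp
qed

lemma cross_form_same: "1 < n \<Longrightarrow> cross_form n x w w = 0"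
  unfolding cross_form_def by (rule det_rows_identical_rows[of 0 n 1]) (auto simp: cross_rows_def)

lemma cross_form_swap:
  assumes "1 < n"
  shows "cross_form n x u w = - cross_form n x w u"
proof -
  have "(cross_rows x w u)(0 := cross_rows x w u 1, 1 := cross_rows x w u 0) = cross_rows x u w"
    unfolding cross_rows_def by auto
  then show ?thesis
    unfolding cross_form_def using det_rows_swap[of 0 n 1 "cross_rows x w u"] assms by simp
qed

lemma cross_form_row: "0 < i \<Longrightarrow> i < n - 1 \<Longrightarrow> cross_form n x (x i) w = 0"
  unfolding cross_form_def by (rule det_rows_identical_rows[of 0 n "i + 1"]) (auto simp: cross_rows_def)

lemma cross_form_cong:
  assumes "\<And>i. 0 < i \<Longrightarrow> i < n - 1 \<Longrightarrow> x i = y i"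
  shows "cross_form n x u w = cross_form n y u w"
  unfolding cross_form_def
  by (rule det_rows_cong) (auto simp: cross_rows_def assms)

lemma gen_cross_eq_cross_form: "j < n \<Longrightarrow> gen_cross n x j = cross_form n x (unit_vec j) (x 0)"
  unfolding gen_cross_def cross_form_def det_rows_def cross_rows_def unit_vec_def
  by (auto intro!: sum.cong prod.cong)

lemma vdot_gen_cross: "0 < n \<Longrightarrow> vdot n v (gen_cross n x) = cross_form n x v (x 0)"
  unfolding vdot_def by (simp add: gen_cross_eq_cross_form cross_form_linear_left[of n x v])

lemma gen_cross_cong:
  assumes "\<And>i. i < n \<Longrightarrow> x i = y i"
  shows "gen_cross n x = gen_cross n y"
  unfolding gen_cross_def
  by (intro ext if_cong refl sum.cong arg_cong2[where f = "(*)"] prod.cong) (auto simp: assms)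

lemma cross_form_plucker:
  assumes n: "2 \<le> n" and pq: "cross_form n x p q \<noteq> 0"
  shows "cross_form n x p q * cross_form n x v u
           = cross_form n x q u * cross_form n x p v - cross_form n x p u * cross_form n x q v"
proof -
  let ?D = "cross_form n x"
  define g where "g w = ?D p q * ?D w u - ?D p u * ?D w q + ?D q u * ?D w p" for w
  have g_linear: "g w = (\<Sum>l<n. w l * g (unit_vec l))" for w
  proof -
    have "(\<Sum>l<n. w l * g (unit_vec l))
        = ?D p q * (\<Sum>l<n. w l * ?D (unit_vec l) u) - ?D p u * (\<Sum>l<n. w l * ?D (unit_vec l) q)
          + ?D q u * (\<Sum>l<n. w l * ?D (unit_vec l) p)"
      by (simp add: g_def sum_distrib_left sum_subtractf sum.distrib algebra_simps)
    then show ?thesis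
      using n by (simp add: g_def flip: cross_form_linear_left)
  qed
  have g_rows: "(\<Sum>l<n. cross_rows x p q i l * g (unit_vec l)) = 0" if "i < n" for i
  proof -
    have "g (cross_rows x p q i) = 0"
    proof (cases "i = 0 \<or> i = 1")
      case True
      then show ?thesis
        using n by (auto simp: g_def cross_rows_def cross_form_same cross_form_swap[of n x q p])
    next
      case False
      then have "0 < i - 1" "i - 1 < n - 1"
        using that by auto
      then show ?thesis
        using False by (simp add: g_def cross_rows_def cross_form_row)
    qed
    then show ?thesis
      by (simp add: g_linear[symmetric])
  qed
  \<comment> \<open>\<open>g\<close> is a linear form vanishing on the rows of the nonsingular matrix
    \<open>(p, q, x 1, \<dots>, x (n - 2))\<close>.\<close>
  have "g (unit_vec l) = 0" if "l < n" for l
    by (rule det_rows_kernel_trivial[OF _ g_rows that]) (use pq in \<open>simp add: cross_form_def\<close>)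
  then have "g v = 0" by (simp add: g_linear[of v])
  then show ?thesis
    unfolding g_def using n cross_form_swap[of n x v p] cross_form_swap[of n x v q] by simp
qed

lemma gen_cross_eq_zero_if_minors_zero:
  assumes "2 \<le> n" and "\<forall>j<n. \<forall>k<n. cross_form n x (unit_vec j) (unit_vec k) = 0"
  shows "gen_cross n x l = 0"
proof (cases "l < n")
  case True
  then show ?thesis
    using assms cross_form_linear_right[of n x "unit_vec l" "x 0"] by (simp add: gen_cross_eq_cross_form)
qed (simp add: gen_cross_def)

text \<open>The direction of a nonzero \<open>(a, b)\<close> is encoded by the side of the diagonal
  \<open>|a| = |b|\<close> it lies on and by the ratio of the smaller to the larger coordinate, a number in
  \<open>[-1, 1]\<close>; \<open>slope_bin \<delta>\<close> records both, the ratio to precision \<open>\<delta>\<close>.\<close>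

definition slope_side :: "real \<Rightarrow> real \<Rightarrow> real" where
  "slope_side a b = (if \<bar>b\<bar> \<le> \<bar>a\<bar> then 0 else 1)"

definition bounded_slope :: "real \<Rightarrow> real \<Rightarrow> real" where
  "bounded_slope a b = (if \<bar>b\<bar> \<le> \<bar>a\<bar> then b / a else a / b)"

definition slope_bin :: "real \<Rightarrow> real \<Rightarrow> real \<Rightarrow> real" where
  "slope_bin \<delta> a b = slope_side a b + 2 * of_int \<lfloor>(bounded_slope a b + 1) / \<delta>\<rfloor>"

definition num_slope_bins :: "real \<Rightarrow> nat" where
  "num_slope_bins \<delta> = 2 * (nat \<lfloor>2 / \<delta>\<rfloor> + 1)"

lemma bounded_slope_abs_le: "\<bar>bounded_slope a b\<bar> \<le> 1"
  unfolding bounded_slope_def by (auto simp: abs_divide divide_le_eq_1)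

lemma slope_bin_eq_imp_close:
  assumes d: "0 < \<delta>" and eq: "slope_bin \<delta> a b = slope_bin \<delta> a' b'"
  shows "slope_side a b = slope_side a' b'" and "\<bar>bounded_slope a b - bounded_slope a' b'\<bar> \<le> \<delta>"
proof -
  define k where "k = \<lfloor>(bounded_slope a b + 1) / \<delta>\<rfloor>"
  define k' where "k' = \<lfloor>(bounded_slope a' b' + 1) / \<delta>\<rfloor>"
  have e: "slope_side a b - slope_side a' b' = 2 * of_int (k' - k)"
    using eq unfolding slope_bin_def k_def k'_def by simp
  moreover have "\<bar>slope_side a b - slope_side a' b'\<bar> \<le> 1"
    unfolding slope_side_def by auto
  ultimately have "k' = k"
    by (simp add: abs_mult)
  then show "slope_side a b = slope_side a' b'"
    using e by simp
  have "\<bar>(bounded_slope a b + 1) / \<delta> - (bounded_slope a' b' + 1) / \<delta>\<bar> < 1"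
    using \<open>k' = k\<close> unfolding k_def k'_def by linarith
  then show "\<bar>bounded_slope a b - bounded_slope a' b'\<bar> \<le> \<delta>"
    using d by (simp add: diff_divide_distrib[symmetric] abs_divide)
qed

lemma slope_bin_eq_imp_parallel:
  assumes d: "0 < \<delta>" and eq: "slope_bin \<delta> a b = slope_bin \<delta> a' b'"
  shows "\<bar>a * b' - b * a'\<bar> \<le> max \<bar>a\<bar> \<bar>b\<bar> * max \<bar>a'\<bar> \<bar>b'\<bar> * \<delta>"
proof -
  note side = slope_bin_eq_imp_close(1)[OF d eq] and td = slope_bin_eq_imp_close(2)[OF d eq]
  show ?thesis
  proof (cases "\<bar>b\<bar> \<le> \<bar>a\<bar>")
    case True
    then have "\<bar>b'\<bar> \<le> \<bar>a'\<bar>"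
      using side unfolding slope_side_def by (auto split: if_splits)
    then have "a * b' - b * a' = a * a' * (bounded_slope a' b' - bounded_slope a b)"
      using True unfolding bounded_slope_def by (auto simp: field_simps)
    then have "\<bar>a * b' - b * a'\<bar> \<le> \<bar>a\<bar> * \<bar>a'\<bar> * \<delta>"
      using td by (simp add: abs_mult abs_minus_commute mult_left_mono)
    then show ?thesis
      using d by (smt (verit) abs_ge_zero max.cobounded1 mult_mono mult_right_mono zero_le_mult_iff)
  next
    case False
    then have "\<not> \<bar>b'\<bar> \<le> \<bar>a'\<bar>"
      using side unfolding slope_side_def by (auto split: if_splits)
    moreover have "b \<noteq> 0" "b' \<noteq> 0"
      using False \<open>\<not> \<bar>b'\<bar> \<le> \<bar>a'\<bar>\<close> by auto
    ultimately have "a * b' - b * a' = b * b' * (bounded_slope a b - bounded_slope a' b')"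
      using False unfolding bounded_slope_def by (auto simp: field_simps)
    then have "\<bar>a * b' - b * a'\<bar> \<le> \<bar>b\<bar> * \<bar>b'\<bar> * \<delta>"
      using td by (simp add: abs_mult mult_left_mono)
    then show ?thesis
      using d by (smt (verit) abs_ge_zero max.cobounded2 mult_mono mult_right_mono zero_le_mult_iff)
  qed
qed

lemma slope_bin_range:
  assumes d: "0 < \<delta>"
  shows "slope_bin \<delta> a b \<in> real ` {..<num_slope_bins \<delta>}"
proof -
  define k where "k = \<lfloor>(bounded_slope a b + 1) / \<delta>\<rfloor>"
  have t: "-1 \<le> bounded_slope a b" "bounded_slope a b \<le> 1"
    using bounded_slope_abs_le[of a b] by auto
  then have k0: "0 \<le> k"
    unfolding k_def using d by simp
  have "(bounded_slope a b + 1) / \<delta> \<le> 2 / \<delta>"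
    using t d by (simp add: divide_right_mono)
  then have k2: "k \<le> \<lfloor>2 / \<delta>\<rfloor>"
    unfolding k_def by (simp add: floor_mono)
  define N where "N = (if slope_side a b = 0 then 0 else 1) + 2 * nat k"
  have "slope_bin \<delta> a b = real N"
    unfolding slope_bin_def N_def k_def[symmetric] using k0 by (auto simp: slope_side_def)
  moreover have "N < num_slope_bins \<delta>"
    unfolding N_def num_slope_bins_def using k0 k2 by auto
  ultimately show ?thesis by auto
qed

lemma num_slope_bins_le:
  assumes "0 < \<delta>"
  shows "real (num_slope_bins \<delta>) \<le> 4 / \<delta> + 2"
proof -
  define a where "a = nat \<lfloor>2 / \<delta>\<rfloor>"
  have "real a \<le> 2 / \<delta>"
    unfolding a_def using assms by simp
  have "real (num_slope_bins \<delta>) = 2 * real a + 2"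
    unfolding num_slope_bins_def a_def by simp
  also have "\<dots> \<le> 2 * (2 / \<delta>) + 2"
    using \<open>real a \<le> 2 / \<delta>\<close> by simp
  also have "\<dots> = 4 / \<delta> + 2"
    by simp
  finally show ?thesis .
qed

lemma vdot_normalized_cross_le:
  assumes n: "2 \<le> n" and jk: "j < n" "k < n"
    and \<eta>: "0 < \<eta>" "\<eta> \<le> \<bar>cross_form n x (unit_vec j) (unit_vec k)\<bar>" and \<delta>: "0 < \<delta>"
    and R: "\<bar>cross_form n x (unit_vec j) v\<bar> \<le> R" "\<bar>cross_form n x (unit_vec k) v\<bar> \<le> R"
    and bin: "slope_bin \<delta> (cross_form n x (unit_vec j) (x 0)) (cross_form n x (unit_vec k) (x 0))
            = slope_bin \<delta> (cross_form n x (unit_vec j) v) (cross_form n x (unit_vec k) v)"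
  shows "\<bar>vdot n v (\<lambda>l. gen_cross n x l / supnorm n (gen_cross n x))\<bar> \<le> R * \<delta> / \<eta>"
proof -
  let ?D = "cross_form n x"
  define N where "N = supnorm n (gen_cross n x)"
  have mf: "?D (unit_vec j) (unit_vec k) * ?D v (x 0)
      = ?D (unit_vec k) (x 0) * ?D (unit_vec j) v - ?D (unit_vec j) (x 0) * ?D (unit_vec k) v"
    by (rule cross_form_plucker) (use n \<eta> in auto)
  have N: "\<bar>?D (unit_vec j) (x 0)\<bar> \<le> N" "\<bar>?D (unit_vec k) (x 0)\<bar> \<le> N"
    unfolding N_def supnorm_def using jk by (auto simp: gen_cross_eq_cross_form[symmetric] intro!: Max_ge)
  have "\<bar>?D (unit_vec j) (unit_vec k)\<bar> * \<bar>?D v (x 0)\<bar>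
      \<le> max \<bar>?D (unit_vec j) (x 0)\<bar> \<bar>?D (unit_vec k) (x 0)\<bar> * max \<bar>?D (unit_vec j) v\<bar> \<bar>?D (unit_vec k) v\<bar> * \<delta>"
    using slope_bin_eq_imp_parallel[OF \<delta> bin] mf by (simp add: abs_mult[symmetric] abs_minus_commute)
  also have "\<dots> \<le> N * R * \<delta>"
    using N R \<delta> by (intro mult_right_mono mult_mono) auto
  finally have bound: "\<eta> * \<bar>?D v (x 0)\<bar> \<le> N * R * \<delta>"
    using \<eta> by (meson abs_ge_zero mult_right_mono order.trans)
  have vd: "vdot n v (\<lambda>l. gen_cross n x l / N) = ?D v (x 0) / N"
    using n vdot_gen_cross[of n v x] unfolding vdot_def by (simp add: sum_divide_distrib[symmetric])
  have "0 \<le> R" "0 \<le> N"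
    using R N by linarith+
  show ?thesis
  proof (cases "N = 0")
    case True
    then show ?thesis
      using vd \<open>0 \<le> R\<close> \<delta> \<eta> by (simp add: N_def)
  next
    case False
    then have "0 < N"
      using \<open>0 \<le> N\<close> by simp
    then have "\<bar>?D v (x 0)\<bar> / N \<le> R * \<delta> / \<eta>"
      using bound \<eta> by (simp add: divide_simps mult.commute mult.left_commute)
    then show ?thesis
      using vd \<open>0 < N\<close> by (simp add: abs_divide N_def)
  qed
qed

lemma component_measurable_of_sets_eq:
  assumes "sets N = sets (PiM {..<n} (\<lambda>_. borel))" and "c < n"
  shows "(\<lambda>y. y c) \<in> borel_measurable N"
proof -
  have "(\<lambda>y. y c) \<in> borel_measurable (PiM {..<n} (\<lambda>_. borel))"
    using assms(2) by (intro measurable_component_singleton) auto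
  then show ?thesis
    by (simp add: measurable_cong_sets[OF assms(1) refl])
qed

lemma entry_measurable_PiM:
  assumes "sets N = sets (PiM {..<n} (\<lambda>_. borel))" and "a \<in> I" and "c < n"
  shows "(\<lambda>x. x a c) \<in> borel_measurable (PiM I (\<lambda>_. N))"
  using measurable_compose[OF measurable_component_singleton[OF assms(2)]
      component_measurable_of_sets_eq[OF assms(1,3)]]
  by simp

lemma cross_form_measurable:
  assumes "\<And>i c. 0 < i \<Longrightarrow> i < n - 1 \<Longrightarrow> c < n \<Longrightarrow> (\<lambda>w. x w i c) \<in> borel_measurable K"
    and "\<And>c. c < n \<Longrightarrow> (\<lambda>w. u w c) \<in> borel_measurable K"
    and "\<And>c. c < n \<Longrightarrow> (\<lambda>w. v w c) \<in> borel_measurable K"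
  shows "(\<lambda>w. cross_form n (x w) (u w) (v w)) \<in> borel_measurable K"
  unfolding cross_form_def
proof (rule det_rows_measurable)
  fix i c assume "i < n" "c < n"
  show "(\<lambda>w. cross_rows (x w) (u w) (v w) i c) \<in> borel_measurable K"
  proof (cases "i = 0 \<or> i = 1")
    case True
    then show ?thesis
      using assms(2,3) \<open>c < n\<close> by (auto simp: cross_rows_def)
  next
    case False
    then have "0 < i - 1" "i - 1 < n - 1"
      using \<open>i < n\<close> by auto
    then show ?thesis
      using assms(1) \<open>c < n\<close> False by (simp add: cross_rows_def)
  qed
qed

lemma cross_form_measurable_PiM:
  assumes N: "sets N = sets (PiM {..<n} (\<lambda>_. borel))"
  shows "(\<lambda>x. cross_form n x (unit_vec j) (unit_vec k)) \<in> borel_measurable (PiM {..<n} (\<lambda>_. N))"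
    and "0 < n \<Longrightarrow> (\<lambda>x. cross_form n x (unit_vec j) (x 0)) \<in> borel_measurable (PiM {..<n} (\<lambda>_. N))"
proof -
  have entry: "(\<lambda>x. x i c) \<in> borel_measurable (PiM {..<n} (\<lambda>_. N))" if "i < n" "c < n" for i c
    by (rule entry_measurable_PiM[OF N]) (use that in auto)
  show "(\<lambda>x. cross_form n x (unit_vec j) (unit_vec k)) \<in> borel_measurable (PiM {..<n} (\<lambda>_. N))"
    by (rule cross_form_measurable) (auto intro: entry)
  show "(\<lambda>x. cross_form n x (unit_vec j) (x 0)) \<in> borel_measurable (PiM {..<n} (\<lambda>_. N))" if "0 < n"
    by (rule cross_form_measurable) (use that in \<open>auto intro: entry\<close>)
qed

definition dot_last_normal :: "nat \<Rightarrow> (nat \<Rightarrow> nat \<Rightarrow> real) \<Rightarrow> real" where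
  "dot_last_normal n x = vdot n (x (n - 1)) (\<lambda>l. gen_cross n x l / supnorm n (gen_cross n x))"

lemma dot_last_normal_eq_zero_if_minors_zero:
  assumes "2 \<le> n" and "\<forall>j<n. \<forall>k<n. cross_form n x (unit_vec j) (unit_vec k) = 0"
  shows "dot_last_normal n x = 0"
  using gen_cross_eq_zero_if_minors_zero[OF assms] by (simp add: dot_last_normal_def vdot_def)

lemma dot_last_normal_restrict:
  assumes "0 < n"
  shows "dot_last_normal n (\<lambda>i\<in>{..<n}. x i) = dot_last_normal n x"
  using gen_cross_cong[of n "\<lambda>i\<in>{..<n}. x i" x] assms by (simp add: dot_last_normal_def)

lemma dot_last_normal_measurable:
  assumes N: "sets N = sets (PiM {..<n} (\<lambda>_. borel))" and n: "0 < n"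
  shows "dot_last_normal n \<in> borel_measurable (PiM {..<n} (\<lambda>_. N))"
proof -
  let ?P = "PiM {..<n} (\<lambda>_. N)"
  have entry: "(\<lambda>x. x i c) \<in> borel_measurable ?P" if "i < n" "c < n" for i c
    by (rule entry_measurable_PiM[OF N]) (use that in auto)
  have cross: "(\<lambda>x. gen_cross n x l) \<in> borel_measurable ?P" if "l < n" for l
    using cross_form_measurable_PiM(2)[OF N n, of l] that by (simp add: gen_cross_eq_cross_form)
  have norm: "(\<lambda>x. supnorm n (gen_cross n x)) \<in> borel_measurable ?P"
    unfolding supnorm_def by (rule borel_measurable_Max) (use cross in auto)
  show ?thesis
    unfolding dot_last_normal_def vdot_def
  proof (rule borel_measurable_sum)
    fix l assume "l \<in> {..<n}"
    then have "(\<lambda>x. x (n - 1) l) \<in> borel_measurable ?P" "(\<lambda>x. gen_cross n x l) \<in> borel_measurable ?P"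
      using entry cross n by auto
    then show "(\<lambda>x. x (n - 1) l * (gen_cross n x l / supnorm n (gen_cross n x))) \<in> borel_measurable ?P"
      using norm by measurable
  qed
qed

lemma dot_last_normal_random_variable:
  assumes "\<And>i. i < n \<Longrightarrow> X i \<in> measurable M (PiM {..<n} (\<lambda>_. borel))" and "0 < n"
  shows "(\<lambda>\<omega>. dot_last_normal n (\<lambda>i. X i \<omega>)) \<in> borel_measurable M"
proof -
  have "(\<lambda>\<omega>. \<lambda>i\<in>{..<n}. X i \<omega>) \<in> measurable M (PiM {..<n} (\<lambda>_. PiM {..<n} (\<lambda>_. borel)))"
    using assms(1) by (intro measurable_restrict) auto
  from measurable_compose[OF this dot_last_normal_measurable[OF refl assms(2)]]
  show ?thesis
    using assms(2) by (simp add: dot_last_normal_restrict)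
qed

lemma ennreal_sum_squared_le:
  fixes h :: "'c \<Rightarrow> ennreal"
  assumes L: "finite L" and h: "\<And>b. b \<in> L \<Longrightarrow> h b \<noteq> \<top>"
  shows "(\<Sum>b\<in>L. h b)\<^sup>2 \<le> of_nat (card L) * (\<Sum>b\<in>L. (h b)\<^sup>2)"
proof -
  define r where "r b = enn2real (h b)" for b
  have hr: "h b = ennreal (r b)" if "b \<in> L" for b
    using h[OF that] unfolding r_def by (simp add: ennreal_enn2real_if)
  have r0: "0 \<le> r b" for b
    unfolding r_def by simp
  have "(\<Sum>b\<in>L. h b) = ennreal (\<Sum>b\<in>L. r b)"
    using hr r0 by (simp add: sum_ennreal cong: sum.cong)
  then have lhs: "(\<Sum>b\<in>L. h b)\<^sup>2 = ennreal ((\<Sum>b\<in>L. r b)\<^sup>2)"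
    using r0 by (simp add: ennreal_power sum_nonneg)
  have "(\<Sum>b\<in>L. (h b)\<^sup>2) = ennreal (\<Sum>b\<in>L. (r b)\<^sup>2)"
    using hr r0 by (simp add: ennreal_power sum_ennreal cong: sum.cong)
  then have rhs: "of_nat (card L) * (\<Sum>b\<in>L. (h b)\<^sup>2) = ennreal (real (card L) * (\<Sum>b\<in>L. (r b)\<^sup>2))"
    by (simp add: ennreal_mult sum_nonneg ennreal_of_nat_eq_real_of_nat)
  have "(\<Sum>b\<in>L. r b * 1)\<^sup>2 \<le> (\<Sum>b\<in>L. (r b)\<^sup>2) * (\<Sum>b\<in>L. 1\<^sup>2)"
    by (rule Cauchy_Schwarz_ineq_sum)
  then show ?thesis
    unfolding lhs rhs by (intro ennreal_leI) (simp add: mult.commute)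
qed

lemma squared_nn_integral_sum_le:
  assumes Q: "prob_space Q" and L: "finite L"
    and H: "\<And>b. b \<in> L \<Longrightarrow> H b \<in> borel_measurable Q" "\<And>b z. b \<in> L \<Longrightarrow> H b z \<noteq> \<top>"
  shows "(\<integral>\<^sup>+z. (\<Sum>b\<in>L. H b z) \<partial>Q)\<^sup>2 \<le> of_nat (card L) * (\<Sum>b\<in>L. \<integral>\<^sup>+z. (H b z)\<^sup>2 \<partial>Q)"
proof -
  interpret prob_space Q by fact
  have "(\<integral>\<^sup>+z. (\<Sum>b\<in>L. H b z) \<partial>Q)\<^sup>2 = (\<integral>\<^sup>+z. (\<Sum>b\<in>L. H b z) * 1 \<partial>Q)\<^sup>2"
    by simp
  also have "\<dots> \<le> (\<integral>\<^sup>+z. (\<Sum>b\<in>L. H b z)\<^sup>2 \<partial>Q) * (\<integral>\<^sup>+z. 1\<^sup>2 \<partial>Q)"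
    by (rule Cauchy_Schwarz_nn_integral) (use H in auto)
  also have "\<dots> = (\<integral>\<^sup>+z. (\<Sum>b\<in>L. H b z)\<^sup>2 \<partial>Q)"
    by (simp add: emeasure_space_1)
  also have "\<dots> \<le> (\<integral>\<^sup>+z. of_nat (card L) * (\<Sum>b\<in>L. (H b z)\<^sup>2) \<partial>Q)"
    by (intro nn_integral_mono ennreal_sum_squared_le[OF L] H(2))
  also have "\<dots> = of_nat (card L) * (\<Sum>b\<in>L. \<integral>\<^sup>+z. (H b z)\<^sup>2 \<partial>Q)"
    using H(1) by (simp add: nn_integral_cmult nn_integral_sum)
  finally show ?thesis .
qed

context
  fixes \<mu> :: "'b measure" and J :: "nat set" and m :: nat and \<phi> :: "'b \<Rightarrow> (nat \<Rightarrow> 'b) \<Rightarrow> real"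
    and P Q :: "(nat \<Rightarrow> 'b) measure"
  assumes prob: "prob_space \<mu>" and J: "finite J" "0 \<notin> J" "m \<notin> J" "m \<noteq> 0"
    and P_eq: "P = PiM (insert 0 (insert m J)) (\<lambda>_. \<mu>)" and Q_eq: "Q = PiM J (\<lambda>_. \<mu>)"
    and \<phi>_measurable: "(\<lambda>(z, u). \<phi> u z) \<in> borel_measurable (Q \<Otimes>\<^sub>M \<mu>)"
    and \<phi>_local: "\<And>a x y. (\<And>i. i \<in> J \<Longrightarrow> x i = y i) \<Longrightarrow> \<phi> a x = \<phi> a y"
begin

definition label_prob :: "real \<Rightarrow> (nat \<Rightarrow> 'b) \<Rightarrow> ennreal" where
  "label_prob b z = (\<integral>\<^sup>+u. (if \<phi> u z = b then 1 else 0) \<partial>\<mu>)"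

lemma nn_integral_PiM_two_coordinates:
  assumes "f \<in> borel_measurable P"
  shows "(\<integral>\<^sup>+x. f x \<partial>P) = (\<integral>\<^sup>+z. \<integral>\<^sup>+v. \<integral>\<^sup>+u. f (z(m := v, 0 := u)) \<partial>\<mu> \<partial>\<mu> \<partial>Q)"
proof -
  interpret prob_space \<mu> by (fact prob)
  interpret product_sigma_finite "\<lambda>_. \<mu>" by standard
  have "(\<integral>\<^sup>+x. f x \<partial>P) = (\<integral>\<^sup>+y. \<integral>\<^sup>+u. f (y(0 := u)) \<partial>\<mu> \<partial>PiM (insert m J) (\<lambda>_. \<mu>))"
    unfolding P_eq by (rule product_nn_integral_insert) (use J assms[unfolded P_eq] in auto)
  also have "\<dots> = (\<integral>\<^sup>+z. \<integral>\<^sup>+v. \<integral>\<^sup>+u. f (z(m := v, 0 := u)) \<partial>\<mu> \<partial>\<mu> \<partial>Q)"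
    unfolding Q_eq by (rule product_nn_integral_insert) (use J assms[unfolded P_eq] in measurable)
  finally show ?thesis .
qed

lemma label_at_measurable:
  assumes "i \<in> insert 0 (insert m J)"
  shows "(\<lambda>x. \<phi> (x i) x) \<in> borel_measurable P"
proof -
  have "(\<lambda>x. (restrict x J, x i)) \<in> measurable P (Q \<Otimes>\<^sub>M \<mu>)"
    unfolding P_eq Q_eq using assms
    by (intro measurable_Pair measurable_restrict_subset measurable_component_singleton) auto
  from measurable_compose[OF this \<phi>_measurable]
  have "(\<lambda>x. \<phi> (x i) (restrict x J)) \<in> borel_measurable P"
    by simp
  moreover have "\<phi> (x i) (restrict x J) = \<phi> (x i) x" for x
    by (rule \<phi>_local) simp
  ultimately show ?thesis
    by simp
qed

lemma label_indicator_measurable: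
  assumes "i \<in> insert 0 (insert m J)"
  shows "(\<lambda>x. if \<phi> (x i) x = b then 1 else 0 :: ennreal) \<in> borel_measurable P"
  using label_at_measurable[OF assms] by measurable

lemma label_event_measurable:
  assumes "finite L"
  shows "{x \<in> space P. \<phi> (x 0) x \<in> L} \<in> sets P"
    and "{x \<in> space P. \<phi> (x 0) x \<in> L \<and> \<phi> (x m) x = \<phi> (x 0) x} \<in> sets P"
proof -
  have "Measurable.pred P (\<lambda>x. \<phi> (x 0) x \<in> L)"
    using assms label_at_measurable[of 0] by (intro pred_sets2[of L]) (auto simp: finite_imp_closed)
  moreover have "Measurable.pred P (\<lambda>x. \<phi> (x m) x = \<phi> (x 0) x)"
    unfolding pred_def using label_at_measurable[of 0] label_at_measurable[of m]
    by (intro measurable_equality_set) auto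
  ultimately show "{x \<in> space P. \<phi> (x 0) x \<in> L} \<in> sets P"
    and "{x \<in> space P. \<phi> (x 0) x \<in> L \<and> \<phi> (x m) x = \<phi> (x 0) x} \<in> sets P"
    by measurable
qed

lemma label_pair_measurable:
  "(\<lambda>(z, u). if \<phi> u z = b then 1 else 0 :: ennreal) \<in> borel_measurable (Q \<Otimes>\<^sub>M \<mu>)"
proof -
  have "(\<lambda>w. if (\<lambda>(z, u). \<phi> u z) w = b then 1 else 0 :: ennreal) \<in> borel_measurable (Q \<Otimes>\<^sub>M \<mu>)"
    using \<phi>_measurable by measurable
  then show ?thesis
    by (simp add: case_prod_beta')
qed

lemma label_prob_measurable: "label_prob b \<in> borel_measurable Q"
proof -
  interpret prob_space \<mu> by (fact prob)
  show ?thesis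
    unfolding label_prob_def using label_pair_measurable by measurable
qed

lemma label_prob_le_1: "label_prob b z \<le> 1"
proof -
  interpret prob_space \<mu> by (fact prob)
  have "label_prob b z \<le> (\<integral>\<^sup>+u. 1 \<partial>\<mu>)"
    unfolding label_prob_def by (intro nn_integral_mono) simp
  then show ?thesis
    by (simp add: emeasure_space_1)
qed

lemma label_upd: "\<phi> u (z(m := v, 0 := w)) = \<phi> u z"
  by (rule \<phi>_local) (use J in auto)

lemma emeasure_label_in:
  assumes "finite L"
  shows "emeasure P {x \<in> space P. \<phi> (x 0) x \<in> L}
           = (\<integral>\<^sup>+z. (\<Sum>b\<in>L. label_prob b z) \<partial>Q)"
proof -
  interpret prob_space \<mu> by (fact prob)
  have "emeasure P {x \<in> space P. \<phi> (x 0) x \<in> L}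
      = (\<integral>\<^sup>+x. indicator {x \<in> space P. \<phi> (x 0) x \<in> L} x \<partial>P)"
    by (rule nn_integral_indicator[symmetric]) (rule label_event_measurable[OF assms])
  also have "\<dots> = (\<integral>\<^sup>+x. (\<Sum>b\<in>L. if \<phi> (x 0) x = b then 1 else 0) \<partial>P)"
    using assms by (intro nn_integral_cong) (auto simp: indicator_def sum.delta sum.delta')
  also have "\<dots> = (\<Sum>b\<in>L. \<integral>\<^sup>+x. (if \<phi> (x 0) x = b then 1 else 0) \<partial>P)"
    by (rule nn_integral_sum) (simp add: label_indicator_measurable)
  also have "\<dots> = (\<Sum>b\<in>L. \<integral>\<^sup>+z. label_prob b z \<partial>Q)"
    by (simp add: nn_integral_PiM_two_coordinates label_indicator_measurable label_upd label_prob_def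
        emeasure_space_1)
  also have "\<dots> = (\<integral>\<^sup>+z. (\<Sum>b\<in>L. label_prob b z) \<partial>Q)"
    by (rule nn_integral_sum[symmetric]) (simp add: label_prob_measurable)
  finally show ?thesis .
qed

lemma emeasure_label_collision:
  assumes "finite L"
  shows "emeasure P {x \<in> space P. \<phi> (x 0) x \<in> L \<and> \<phi> (x m) x = \<phi> (x 0) x}
           = (\<Sum>b\<in>L. \<integral>\<^sup>+z. (label_prob b z)\<^sup>2 \<partial>Q)"
proof -
  interpret prob_space \<mu> by (fact prob)
  let ?I = "\<lambda>b x i. if \<phi> (x i) x = b then 1 else 0 :: ennreal"
  have "emeasure P {x \<in> space P. \<phi> (x 0) x \<in> L \<and> \<phi> (x m) x = \<phi> (x 0) x}
      = (\<integral>\<^sup>+x. indicator {x \<in> space P. \<phi> (x 0) x \<in> L \<and> \<phi> (x m) x = \<phi> (x 0) x} x \<partial>P)"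
    by (rule nn_integral_indicator[symmetric]) (rule label_event_measurable[OF assms])
  also have "\<dots> = (\<integral>\<^sup>+x. (\<Sum>b\<in>L. ?I b x 0 * ?I b x m) \<partial>P)"
    using assms by (intro nn_integral_cong) (auto simp: indicator_def sum.delta sum.delta' if_distrib cong: if_cong)
  also have "\<dots> = (\<Sum>b\<in>L. \<integral>\<^sup>+x. ?I b x 0 * ?I b x m \<partial>P)"
    by (rule nn_integral_sum) (use label_indicator_measurable in measurable)
  also have "\<dots> = (\<Sum>b\<in>L. \<integral>\<^sup>+z. \<integral>\<^sup>+v. \<integral>\<^sup>+u.
      (if \<phi> u z = b then 1 else 0) * (if \<phi> v z = b then 1 else 0) \<partial>\<mu> \<partial>\<mu> \<partial>Q)"
    using J(4) label_indicator_measurable[of 0] label_indicator_measurable[of m]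
    by (simp add: nn_integral_PiM_two_coordinates label_upd)
  also have "\<dots> = (\<Sum>b\<in>L. \<integral>\<^sup>+z. (label_prob b z)\<^sup>2 \<partial>Q)"
  proof (intro sum.cong refl nn_integral_cong)
    fix b z assume "z \<in> space Q"
    then have "(\<lambda>u. if \<phi> u z = b then 1 else 0 :: ennreal) \<in> borel_measurable \<mu>"
      using measurable_Pair2[OF label_pair_measurable] by simp
    then show "(\<integral>\<^sup>+v. \<integral>\<^sup>+u. (if \<phi> u z = b then 1 else 0) * (if \<phi> v z = b then 1 else 0) \<partial>\<mu> \<partial>\<mu>)
        = (label_prob b z)\<^sup>2"
      unfolding label_prob_def power2_eq_square by (simp add: nn_integral_multc nn_integral_cmult)
  qed
  finally show ?thesis .
qed

text \<open>Given the coordinates in \<open>J\<close>, the labels at the coordinates \<open>0\<close> and \<open>m\<close> are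
  independent and identically distributed, so Cauchy-Schwarz applies to their conditional law.\<close>

lemma collision_lower_bound:
  assumes "finite L"
  shows "(emeasure P {x \<in> space P. \<phi> (x 0) x \<in> L})\<^sup>2
           \<le> of_nat (card L) * emeasure P {x \<in> space P. \<phi> (x 0) x \<in> L \<and> \<phi> (x m) x = \<phi> (x 0) x}"
  unfolding emeasure_label_in[OF assms] emeasure_label_collision[OF assms]
proof (rule squared_nn_integral_sum_le[OF _ assms label_prob_measurable])
  show "prob_space Q"
    unfolding Q_eq using prob by (intro prob_space_PiM) auto
  show "label_prob b z \<noteq> \<top>" for b z
    using label_prob_le_1[of b z] by (auto simp: top_unique)
qed

end

definition well_conditioned ::
    "nat \<Rightarrow> nat \<Rightarrow> nat \<Rightarrow> real \<Rightarrow> real \<Rightarrow> (nat \<Rightarrow> real) \<Rightarrow> (nat \<Rightarrow> nat \<Rightarrow> real) \<Rightarrow> bool" where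
  "well_conditioned n j k \<eta> R v x \<longleftrightarrow>
     \<eta> \<le> \<bar>cross_form n x (unit_vec j) (unit_vec k)\<bar> \<and>
     \<bar>cross_form n x (unit_vec j) v\<bar> \<le> R \<and> \<bar>cross_form n x (unit_vec k) v\<bar> \<le> R"

text \<open>The label \<open>-1\<close> lies outside the range of \<open>slope_bin\<close> and marks ill-conditioned
  vectors.\<close>

definition bin_label ::
    "nat \<Rightarrow> nat \<Rightarrow> nat \<Rightarrow> real \<Rightarrow> real \<Rightarrow> real \<Rightarrow> (nat \<Rightarrow> real) \<Rightarrow> (nat \<Rightarrow> nat \<Rightarrow> real) \<Rightarrow> real" where
  "bin_label n j k \<eta> R \<delta> v x =
     (if well_conditioned n j k \<eta> R v x
      then slope_bin \<delta> (cross_form n x (unit_vec j) v) (cross_form n x (unit_vec k) v) else -1)"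

lemma bin_label_in_range_iff:
  assumes "0 < \<delta>"
  shows "bin_label n j k \<eta> R \<delta> v x \<in> real ` {..<num_slope_bins \<delta>} \<longleftrightarrow> well_conditioned n j k \<eta> R v x"
  using slope_bin_range[OF assms] by (auto simp: bin_label_def)

lemma bin_label_cong:
  assumes "\<And>i. 0 < i \<Longrightarrow> i < n - 1 \<Longrightarrow> x i = y i"
  shows "bin_label n j k \<eta> R \<delta> v x = bin_label n j k \<eta> R \<delta> v y"
proof -
  have "cross_form n x u w = cross_form n y u w" for u w
    by (rule cross_form_cong) (use assms in auto)
  then show ?thesis
    unfolding bin_label_def well_conditioned_def by simp
qed

lemma bin_label_measurable:
  assumes N: "sets N = sets (PiM {..<n} (\<lambda>_. borel))"
  shows "(\<lambda>(z, u). bin_label n j k \<eta> R \<delta> u z) \<in> borel_measurable (PiM {1..<n-1} (\<lambda>_. N) \<Otimes>\<^sub>M N)"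
proof -
  let ?K = "PiM {1..<n-1} (\<lambda>_. N) \<Otimes>\<^sub>M N"
  have rest: "(\<lambda>w. fst w i c) \<in> borel_measurable ?K" if "0 < i" "i < n - 1" "c < n" for i c
    using measurable_compose[OF measurable_fst entry_measurable_PiM[OF N, of i "{1..<n-1}" c]] that
    by simp
  have new: "(\<lambda>w. snd w c) \<in> borel_measurable ?K" if "c < n" for c
    using measurable_compose[OF measurable_snd component_measurable_of_sets_eq[OF N that]] by simp
  have minor: "(\<lambda>w. cross_form n (fst w) (unit_vec j) (unit_vec k)) \<in> borel_measurable ?K"
    by (intro cross_form_measurable rest) auto
  have coord: "(\<lambda>w. cross_form n (fst w) (unit_vec l) (snd w)) \<in> borel_measurable ?K" for l
    by (intro cross_form_measurable rest new) auto
  show ?thesis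
    unfolding bin_label_def well_conditioned_def slope_bin_def slope_side_def bounded_slope_def
      case_prod_beta
    using minor coord[of j] coord[of k] by measurable
qed

lemma dot_last_normal_le_if_same_label:
  assumes n: "2 \<le> n" and jk: "j < n" "k < n" and \<eta>: "0 < \<eta>" and \<delta>: "0 < \<delta>"
    and wc: "well_conditioned n j k \<eta> R (x 0) x"
    and same: "bin_label n j k \<eta> R \<delta> (x (n - 1)) x = bin_label n j k \<eta> R \<delta> (x 0) x"
  shows "\<bar>dot_last_normal n x\<bar> \<le> R * \<delta> / \<eta>"
proof -
  have wc': "well_conditioned n j k \<eta> R (x (n - 1)) x"
    using same wc bin_label_in_range_iff[OF \<delta>] by metis
  show ?thesis
    unfolding dot_last_normal_def
  proof (rule vdot_normalized_cross_le[OF n jk \<eta> _ \<delta>])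
    show "slope_bin \<delta> (cross_form n x (unit_vec j) (x 0)) (cross_form n x (unit_vec k) (x 0))
        = slope_bin \<delta> (cross_form n x (unit_vec j) (x (n - 1))) (cross_form n x (unit_vec k) (x (n - 1)))"
      using same wc wc' by (simp add: bin_label_def)
  qed (use wc wc' in \<open>auto simp: well_conditioned_def\<close>)
qed

lemma bin_label_collision_prob:
  fixes \<mu> :: "(nat \<Rightarrow> real) measure"
  assumes \<mu>: "prob_space \<mu>" "sets \<mu> = sets (PiM {..<n} (\<lambda>_. borel))" and n: "2 \<le> n" and \<delta>: "0 < \<delta>"
  defines "P \<equiv> PiM {..<n} (\<lambda>_. \<mu>)"
  shows "(measure P {x \<in> space P. well_conditioned n j k \<eta> R (x 0) x})\<^sup>2
    \<le> real (num_slope_bins \<delta>) * measure P {x \<in> space P. well_conditioned n j k \<eta> R (x 0) x \<and>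
         bin_label n j k \<eta> R \<delta> (x (n - 1)) x = bin_label n j k \<eta> R \<delta> (x 0) x}"
proof -
  interpret P: prob_space P
    unfolding P_def by (intro prob_space_PiM) (simp add: \<mu>)
  define L where "L = real ` {..<num_slope_bins \<delta>}"
  let ?lbl = "bin_label n j k \<eta> R \<delta>"
  have P_split: "P = PiM (insert 0 (insert (n - 1) {1..<n-1})) (\<lambda>_. \<mu>)"
    unfolding P_def using n by (intro arg_cong2[where f = PiM] refl) auto
  have in_L: "?lbl v x \<in> L \<longleftrightarrow> well_conditioned n j k \<eta> R v x" for v x
    unfolding L_def by (rule bin_label_in_range_iff[OF \<delta>])
  have "(emeasure P {x \<in> space P. ?lbl (x 0) x \<in> L})\<^sup>2
      \<le> of_nat (card L) * emeasure P {x \<in> space P. ?lbl (x 0) x \<in> L \<and> ?lbl (x (n - 1)) x = ?lbl (x 0) x}"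
    unfolding P_split
  proof (rule collision_lower_bound[OF \<mu>(1), where J = "{1..<n-1}" and Q = "PiM {1..<n-1} (\<lambda>_. \<mu>)"])
    show "(\<lambda>(z, u). ?lbl u z) \<in> borel_measurable (PiM {1..<n-1} (\<lambda>_. \<mu>) \<Otimes>\<^sub>M \<mu>)"
      by (rule bin_label_measurable[OF \<mu>(2)])
    show "?lbl a x = ?lbl a y" if "\<And>i. i \<in> {1..<n-1} \<Longrightarrow> x i = y i" for a x y
      by (rule bin_label_cong) (use that in auto)
  qed (use n in \<open>auto simp: L_def\<close>)
  then have "ennreal ((measure P {x \<in> space P. well_conditioned n j k \<eta> R (x 0) x})\<^sup>2)
      \<le> ennreal (real (card L) * measure P {x \<in> space P. well_conditioned n j k \<eta> R (x 0) x \<and>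
           ?lbl (x (n - 1)) x = ?lbl (x 0) x})"
    unfolding in_L by (simp add: P.emeasure_eq_measure ennreal_power ennreal_of_nat_eq_real_of_nat ennreal_mult)
  moreover have "card L = num_slope_bins \<delta>"
    unfolding L_def by (simp add: card_image)
  ultimately show ?thesis
    by (simp add: ennreal_le_iff)
qed

lemma small_ball_if_well_conditioned:
  fixes \<mu> :: "(nat \<Rightarrow> real) measure"
  assumes \<mu>: "prob_space \<mu>" "sets \<mu> = sets (PiM {..<n} (\<lambda>_. borel))"
    and n: "2 \<le> n" and jk: "j < n" "k < n" and \<eta>: "0 < \<eta>" and R: "0 < R"
    and \<epsilon>: "0 < \<epsilon>" "\<epsilon> \<le> 1"
  defines "P \<equiv> PiM {..<n} (\<lambda>_. \<mu>)"
  shows "(measure P {x \<in> space P. well_conditioned n j k \<eta> R (x 0) x})\<^sup>2 * \<epsilon>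
           \<le> (8 * R / \<eta> + 2) * measure P {x \<in> space P. \<bar>dot_last_normal n x\<bar> < \<epsilon>}"
proof -
  interpret P: prob_space P
    unfolding P_def by (intro prob_space_PiM) (simp add: \<mu>)
  define \<delta> where "\<delta> = \<epsilon> * \<eta> / (2 * R)"
  have \<delta>: "0 < \<delta>"
    unfolding \<delta>_def using \<epsilon> \<eta> R by simp
  let ?W = "{x \<in> space P. well_conditioned n j k \<eta> R (x 0) x}"
  let ?S = "{x \<in> space P. \<bar>dot_last_normal n x\<bar> < \<epsilon>}"
  have "dot_last_normal n \<in> borel_measurable P"
    unfolding P_def by (rule dot_last_normal_measurable[OF \<mu>(2)]) (use n in simp)
  then have S: "?S \<in> sets P"
    by measurable
  have "(measure P ?W)\<^sup>2 \<le> real (num_slope_bins \<delta>) * measure P {x \<in> space P.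
      well_conditioned n j k \<eta> R (x 0) x \<and> bin_label n j k \<eta> R \<delta> (x (n - 1)) x = bin_label n j k \<eta> R \<delta> (x 0) x}"
    unfolding P_def by (rule bin_label_collision_prob[OF \<mu> n \<delta>])
  also have "\<dots> \<le> real (num_slope_bins \<delta>) * measure P ?S"
  proof (intro mult_left_mono P.finite_measure_mono[OF _ S] subsetI)
    fix x assume "x \<in> {x \<in> space P. well_conditioned n j k \<eta> R (x 0) x \<and>
      bin_label n j k \<eta> R \<delta> (x (n - 1)) x = bin_label n j k \<eta> R \<delta> (x 0) x}"
    then have "x \<in> space P" "\<bar>dot_last_normal n x\<bar> \<le> R * \<delta> / \<eta>"
      using dot_last_normal_le_if_same_label[OF n jk \<eta> \<delta>] by auto
    moreover have "R * \<delta> / \<eta> < \<epsilon>"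
      unfolding \<delta>_def using \<epsilon> \<eta> R by (simp add: field_simps)
    ultimately show "x \<in> ?S"
      by simp
  qed simp
  also have "\<dots> \<le> (4 / \<delta> + 2) * measure P ?S"
    using num_slope_bins_le[OF \<delta>] by (simp add: mult_right_mono)
  finally have "(measure P ?W)\<^sup>2 * \<epsilon> \<le> (4 / \<delta> + 2) * \<epsilon> * measure P ?S"
    using \<epsilon> by (simp add: mult_right_mono mult.commute mult.left_commute)
  also have "(4 / \<delta> + 2) * \<epsilon> = 8 * R / \<eta> + 2 * \<epsilon>"
    unfolding \<delta>_def using \<epsilon> \<eta> R by (simp add: field_simps)
  also have "\<dots> * measure P ?S \<le> (8 * R / \<eta> + 2) * measure P ?S"
    using \<epsilon> by (intro mult_right_mono) auto
  finally show ?thesis .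
qed

lemma minors_zero_or_well_conditioned:
  "(\<forall>j<n. \<forall>k<n. cross_form n x (unit_vec j) (unit_vec k) = 0) \<or>
   (\<exists>j<n. \<exists>k<n. \<exists>i::nat. well_conditioned n j k (1 / real (Suc i)) (real (Suc i)) (x 0) x)"
proof (cases "\<forall>j<n. \<forall>k<n. cross_form n x (unit_vec j) (unit_vec k) = 0")
  case False
  then obtain j k where jk: "j < n" "k < n" and minor: "cross_form n x (unit_vec j) (unit_vec k) \<noteq> 0"
    by auto
  obtain i1 :: nat where i1: "1 / \<bar>cross_form n x (unit_vec j) (unit_vec k)\<bar> < i1"
    using reals_Archimedean2 by blast
  obtain i2 :: nat where i2: "max \<bar>cross_form n x (unit_vec j) (x 0)\<bar> \<bar>cross_form n x (unit_vec k) (x 0)\<bar> < i2"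
    using reals_Archimedean2 by blast
  define i where "i = max i1 i2"
  have "1 / \<bar>cross_form n x (unit_vec j) (unit_vec k)\<bar> < real (Suc i)"
    using i1 unfolding i_def by linarith
  then have "1 / real (Suc i) \<le> \<bar>cross_form n x (unit_vec j) (unit_vec k)\<bar>"
    using minor by (simp add: field_simps)
  then have "well_conditioned n j k (1 / real (Suc i)) (real (Suc i)) (x 0) x"
    using i2 unfolding i_def well_conditioned_def by auto
  then show ?thesis
    using jk by blast
qed simp

lemma (in prob_space) countable_cover_positive_prob:
  fixes A :: "'i::countable \<Rightarrow> 'a set"
  assumes "\<And>i. A i \<in> events" and "space M \<subseteq> (\<Union>i. A i)"
  shows "\<exists>i. 0 < prob (A i)"
proof (rule ccontr)
  assume none: "\<not> ?thesis"
  have "A i \<in> null_sets M" for i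
  proof -
    have "prob (A i) \<le> 0"
      using none by (simp add: not_less)
    with measure_nonneg[of M "A i"] have "prob (A i) = 0"
      by linarith
    then show ?thesis
      using assms(1) by (auto intro: null_setsI simp: emeasure_eq_measure)
  qed
  then have "(\<Union>i. A i) \<in> null_sets M"
    by (intro null_sets_UN)
  then have "emeasure M (space M) = 0"
    by (rule null_setsD1[OF null_sets_subset[OF _ sets.top assms(2)]])
  then show False
    by (simp add: emeasure_space_1)
qed

lemma degenerate_or_well_conditioned:
  fixes \<mu> :: "(nat \<Rightarrow> real) measure"
  assumes \<mu>: "prob_space \<mu>" "sets \<mu> = sets (PiM {..<n} (\<lambda>_. borel))" and n: "0 < n"
  defines "P \<equiv> PiM {..<n} (\<lambda>_. \<mu>)"
  shows "0 < measure P {x \<in> space P. \<forall>j<n. \<forall>k<n. cross_form n x (unit_vec j) (unit_vec k) = 0}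
    \<or> (\<exists>j<n. \<exists>k<n. \<exists>i::nat.
         0 < measure P {x \<in> space P. well_conditioned n j k (1 / real (Suc i)) (real (Suc i)) (x 0) x})"
proof -
  interpret P: prob_space P
    unfolding P_def by (intro prob_space_PiM) (simp add: \<mu>)
  define B0 where "B0 = {x \<in> space P. \<forall>j<n. \<forall>k<n. cross_form n x (unit_vec j) (unit_vec k) = 0}"
  define W where "W j k i = {x \<in> space P. well_conditioned n j k (1 / real (Suc i)) (real (Suc i)) (x 0) x}"
    for j k i :: nat
  define A where "A t = (case t of None \<Rightarrow> B0 | Some (j, k, i) \<Rightarrow> if j < n \<and> k < n then W j k i else {})"
    for t :: "(nat \<times> nat \<times> nat) option"
  have minor: "(\<lambda>x. cross_form n x (unit_vec j) (unit_vec k)) \<in> borel_measurable P" for j k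
    unfolding P_def by (rule cross_form_measurable_PiM(1)[OF \<mu>(2)])
  have coord: "(\<lambda>x. cross_form n x (unit_vec j) (x 0)) \<in> borel_measurable P" for j
    unfolding P_def by (rule cross_form_measurable_PiM(2)[OF \<mu>(2) n])
  have "B0 \<in> sets P"
    unfolding B0_def using minor by measurable
  moreover have "W j k i \<in> sets P" for j k i
    unfolding W_def well_conditioned_def using minor coord by measurable
  ultimately have A_events: "A t \<in> sets P" for t
    by (auto simp: A_def split: option.split)
  have A_cover: "space P \<subseteq> (\<Union>t. A t)"
  proof
    fix x assume x: "x \<in> space P"
    from minors_zero_or_well_conditioned[of n x]
    show "x \<in> (\<Union>t. A t)"
    proof
      assume "\<forall>j<n. \<forall>k<n. cross_form n x (unit_vec j) (unit_vec k) = 0"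
      then have "x \<in> A None"
        using x by (simp add: A_def B0_def)
      then show ?thesis by blast
    next
      assume "\<exists>j<n. \<exists>k<n. \<exists>i. well_conditioned n j k (1 / real (Suc i)) (real (Suc i)) (x 0) x"
      then obtain j k i where "j < n" "k < n"
        "well_conditioned n j k (1 / real (Suc i)) (real (Suc i)) (x 0) x"
        by blast
      then have "x \<in> A (Some (j, k, i))"
        using x by (simp add: A_def W_def)
      then show ?thesis by blast
    qed
  qed
  obtain t where pos: "0 < measure P (A t)"
    using P.countable_cover_positive_prob[OF A_events A_cover] by blast
  show ?thesis
  proof (cases t)
    case None
    then show ?thesis
      using pos by (simp add: A_def B0_def)
  next
    case (Some t')
    then obtain j k i where t: "t = Some (j, k, i)"
      by (cases t') auto
    then have jk: "j < n \<and> k < n" and "A t = W j k i"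
      using pos by (auto simp: A_def split: if_splits)
    with pos have "0 < measure P (W j k i)"
      by simp
    then show ?thesis
      using jk unfolding W_def by blast
  qed
qed

lemma small_ball_if_degenerate:
  fixes \<mu> :: "(nat \<Rightarrow> real) measure"
  assumes \<mu>: "prob_space \<mu>" "sets \<mu> = sets (PiM {..<n} (\<lambda>_. borel))"
    and n: "2 \<le> n" and \<epsilon>: "0 < \<epsilon>" "\<epsilon> \<le> 1"
  defines "P \<equiv> PiM {..<n} (\<lambda>_. \<mu>)"
  shows "measure P {x \<in> space P. \<forall>j<n. \<forall>k<n. cross_form n x (unit_vec j) (unit_vec k) = 0} * \<epsilon>
           \<le> measure P {x \<in> space P. \<bar>dot_last_normal n x\<bar> < \<epsilon>}"
proof -
  interpret P: prob_space P
    unfolding P_def by (intro prob_space_PiM) (simp add: \<mu>)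
  have "dot_last_normal n \<in> borel_measurable P"
    unfolding P_def by (rule dot_last_normal_measurable[OF \<mu>(2)]) (use n in simp)
  then have "{x \<in> space P. \<bar>dot_last_normal n x\<bar> < \<epsilon>} \<in> sets P"
    by measurable
  then have "measure P {x \<in> space P. \<forall>j<n. \<forall>k<n. cross_form n x (unit_vec j) (unit_vec k) = 0}
      \<le> measure P {x \<in> space P. \<bar>dot_last_normal n x\<bar> < \<epsilon>}"
    using dot_last_normal_eq_zero_if_minors_zero[OF n] \<epsilon> by (intro P.finite_measure_mono) auto
  then show ?thesis
    using \<epsilon> by (smt (verit) measure_nonneg mult_left_le)
qed

lemma linear_small_ball_bound:
  fixes \<mu> :: "(nat \<Rightarrow> real) measure"
  assumes \<mu>: "prob_space \<mu>" "sets \<mu> = sets (PiM {..<n} (\<lambda>_. borel))" and n: "2 \<le> n"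
  defines "P \<equiv> PiM {..<n} (\<lambda>_. \<mu>)"
  shows "\<exists>c>0. \<forall>\<epsilon>. 0 < \<epsilon> \<longrightarrow> \<epsilon> \<le> 1 \<longrightarrow> c * \<epsilon> \<le> measure P {x \<in> space P. \<bar>dot_last_normal n x\<bar> < \<epsilon>}"
proof -
  interpret P: prob_space P
    unfolding P_def by (intro prob_space_PiM) (simp add: \<mu>)
  let ?S = "\<lambda>\<epsilon>. {x \<in> space P. \<bar>dot_last_normal n x\<bar> < \<epsilon>}"
  consider (degenerate) "0 < measure P {x \<in> space P. \<forall>j<n. \<forall>k<n. cross_form n x (unit_vec j) (unit_vec k) = 0}"
    | (well_conditioned) j k i where "j < n" "k < n"
        "0 < measure P {x \<in> space P. well_conditioned n j k (1 / real (Suc i)) (real (Suc i)) (x 0) x}"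
    using degenerate_or_well_conditioned[OF \<mu>] n unfolding P_def by auto
  then show ?thesis
  proof cases
    case degenerate
    let ?B = "{x \<in> space P. \<forall>j<n. \<forall>k<n. cross_form n x (unit_vec j) (unit_vec k) = 0}"
    have "measure P ?B * \<epsilon> \<le> measure P (?S \<epsilon>)" if "0 < \<epsilon>" "\<epsilon> \<le> 1" for \<epsilon>
      using small_ball_if_degenerate[OF \<mu> n that] unfolding P_def .
    then show ?thesis
      using degenerate by blast
  next
    case (well_conditioned j k i)
    let ?W = "{x \<in> space P. well_conditioned n j k (1 / real (Suc i)) (real (Suc i)) (x 0) x}"
    define C where "C = 8 * real (Suc i) / (1 / real (Suc i)) + 2"
    have "0 < C"
      unfolding C_def by (intro add_nonneg_pos) auto
    have "(measure P ?W)\<^sup>2 / C * \<epsilon> \<le> measure P (?S \<epsilon>)" if "0 < \<epsilon>" "\<epsilon> \<le> 1" for \<epsilon>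
    proof -
      have "(measure P ?W)\<^sup>2 * \<epsilon> \<le> C * measure P (?S \<epsilon>)"
        unfolding C_def P_def
        by (rule small_ball_if_well_conditioned[OF \<mu> n well_conditioned(1,2) _ _ that]) auto
      then show ?thesis
        using \<open>0 < C\<close> by (simp add: pos_divide_le_eq mult.commute mult.left_commute)
    qed
    moreover have "0 < (measure P ?W)\<^sup>2 / C"
      using well_conditioned(3) \<open>0 < C\<close> by simp
    ultimately show ?thesis
      by blast
  qed
qed

lemma (in prob_space) distr_PiM_iid:
  assumes i0: "i0 \<in> I" and rv: "\<And>i. i \<in> I \<Longrightarrow> random_variable S (X i)"
    and indep: "indep_vars (\<lambda>_. S) X I"
    and ident: "\<And>i. i \<in> I \<Longrightarrow> distr M S (X i) = distr M S (X i0)"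
  shows "distr M (PiM I (\<lambda>_. S)) (\<lambda>\<omega>. \<lambda>i\<in>I. X i \<omega>) = PiM I (\<lambda>_. distr M S (X i0))"
proof -
  have "distr M (PiM I (\<lambda>_. S)) (\<lambda>\<omega>. \<lambda>i\<in>I. X i \<omega>) = PiM I (\<lambda>i. distr M S (X i))"
    using indep_vars_iff_distr_eq_PiM'[where I = I and M' = "\<lambda>_. S" and X = X] i0 rv indep by auto
  also have "\<dots> = PiM I (\<lambda>_. distr M S (X i0))"
    using ident by (intro PiM_cong) auto
  finally show ?thesis .
qed

lemma (in prob_space) prob_iid_eq_PiM:
  assumes i0: "i0 \<in> I" and rv: "\<And>i. i \<in> I \<Longrightarrow> random_variable S (X i)"
    and indep: "indep_vars (\<lambda>_. S) X I"
    and ident: "\<And>i. i \<in> I \<Longrightarrow> distr M S (X i) = distr M S (X i0)"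
    and A: "A \<in> sets (PiM I (\<lambda>_. S))"
  shows "prob {\<omega> \<in> space M. (\<lambda>i\<in>I. X i \<omega>) \<in> A} = measure (PiM I (\<lambda>_. distr M S (X i0))) A"
proof -
  have T: "(\<lambda>\<omega>. \<lambda>i\<in>I. X i \<omega>) \<in> measurable M (PiM I (\<lambda>_. S))"
    using rv by (intro measurable_restrict) auto
  have "measure (PiM I (\<lambda>_. distr M S (X i0))) A = prob ((\<lambda>\<omega>. \<lambda>i\<in>I. X i \<omega>) -` A \<inter> space M)"
    using measure_distr[OF T A] distr_PiM_iid[OF i0 rv indep ident] by simp
  also have "(\<lambda>\<omega>. \<lambda>i\<in>I. X i \<omega>) -` A \<inter> space M = {\<omega> \<in> space M. (\<lambda>i\<in>I. X i \<omega>) \<in> A}"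
    by auto
  finally show ?thesis ..
qed

lemma (in prob_space) iid_linear_small_ball_bound:
  fixes X :: "nat \<Rightarrow> 'a \<Rightarrow> nat \<Rightarrow> real"
  assumes n: "2 \<le> n" and rv: "\<And>i. i < n \<Longrightarrow> random_variable (PiM {..<n} (\<lambda>_. borel)) (X i)"
    and indep: "indep_vars (\<lambda>_. PiM {..<n} (\<lambda>_. borel)) X {..<n}"
    and ident: "\<And>i. i < n \<Longrightarrow> distr M (PiM {..<n} (\<lambda>_. borel)) (X i) = distr M (PiM {..<n} (\<lambda>_. borel)) (X 0)"
  shows "\<exists>c>0. \<forall>\<epsilon>. 0 < \<epsilon> \<longrightarrow> \<epsilon> \<le> 1 \<longrightarrow> c * \<epsilon> \<le> prob {\<omega> \<in> space M. \<bar>dot_last_normal n (\<lambda>i. X i \<omega>)\<bar> < \<epsilon>}"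
proof -
  let ?S = "PiM {..<n} (\<lambda>_. borel) :: (nat \<Rightarrow> real) measure"
  define \<mu> where "\<mu> = distr M ?S (X 0)"
  define P where "P = PiM {..<n} (\<lambda>_. \<mu>)"
  have n0: "0 \<in> {..<n}"
    using n by simp
  have \<mu>: "prob_space \<mu>" "sets \<mu> = sets ?S"
    unfolding \<mu>_def using rv[of 0] n by (auto intro: prob_space_distr)
  have space_P: "space P = space (PiM {..<n} (\<lambda>_. ?S))"
    unfolding P_def by (intro sets_eq_imp_space_eq sets_PiM_cong) (auto simp: \<mu>)
  have "dot_last_normal n \<in> borel_measurable (PiM {..<n} (\<lambda>_. ?S))"
    by (rule dot_last_normal_measurable) (use n in auto)
  then have A: "{x \<in> space P. \<bar>dot_last_normal n x\<bar> < \<epsilon>} \<in> sets (PiM {..<n} (\<lambda>_. ?S))" for \<epsilon>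
    unfolding space_P by measurable
  have "prob {\<omega> \<in> space M. \<bar>dot_last_normal n (\<lambda>i. X i \<omega>)\<bar> < \<epsilon>}
      = measure P {x \<in> space P. \<bar>dot_last_normal n x\<bar> < \<epsilon>}" for \<epsilon>
  proof -
    have "prob {\<omega> \<in> space M. (\<lambda>i\<in>{..<n}. X i \<omega>) \<in> {x \<in> space P. \<bar>dot_last_normal n x\<bar> < \<epsilon>}}
        = measure P {x \<in> space P. \<bar>dot_last_normal n x\<bar> < \<epsilon>}"
      unfolding P_def \<mu>_def using rv indep
      by (intro prob_iid_eq_PiM[OF n0 _ _ _ A[unfolded P_def \<mu>_def]]) (auto intro: ident)
    moreover have "(\<lambda>i\<in>{..<n}. X i \<omega>) \<in> space P" if "\<omega> \<in> space M" for \<omega>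
      unfolding space_P using rv that by (intro measurable_space[OF measurable_restrict]) auto
    ultimately show ?thesis
      using n by (simp add: dot_last_normal_restrict cong: conj_cong)
  qed
  then show ?thesis
    using linear_small_ball_bound[OF \<mu> n] unfolding P_def by simp
qed

lemma Liminf_at_right_0_pos_if_linear_lower_bound:
  assumes "0 < c" and "\<And>\<epsilon>. 0 < \<epsilon> \<Longrightarrow> \<epsilon> < 1 \<Longrightarrow> c * \<epsilon> \<le> f \<epsilon>"
  shows "0 < Liminf (at_right 0) (\<lambda>\<epsilon>::real. ereal (f \<epsilon> / \<epsilon>))"
proof -
  have "\<forall>\<^sub>F \<epsilon> in at_right (0::real). \<epsilon> \<in> {0<..<1}"
    by (rule eventually_at_right_real) simp
  then have "\<forall>\<^sub>F \<epsilon> in at_right (0::real). ereal c \<le> ereal (f \<epsilon> / \<epsilon>)"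
    by eventually_elim (use assms in \<open>auto simp: pos_le_divide_eq\<close>)
  then have "ereal c \<le> Liminf (at_right 0) (\<lambda>\<epsilon>. ereal (f \<epsilon> / \<epsilon>))"
    by (rule Liminf_bounded)
  then show ?thesis
    using assms(1) by (meson ereal_less(2) order_less_le_trans)
qed

lemma dyadic_sum_le:
  fixes z :: real
  assumes z: "0 < z"
  shows "(\<Sum>k<K. if z < (1/2)^k then (2::real)^k else 0) \<le> 2 / z"
proof (induction K)
  case (Suc K)
  show ?case
  proof (cases "z < (1/2)^K")
    case True
    have "z < (1/2)^k" if "k < K" for k
    proof -
      have "(1/2::real)^K \<le> (1/2)^k"
        using that by (intro power_decreasing) auto
      then show ?thesis
        using True by linarith
    qed
    then have "(\<Sum>k<K. if z < (1/2)^k then (2::real)^k else 0) = (\<Sum>k<K. 2^k)"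
      by (intro sum.cong) auto
    also have "\<dots> \<le> 2^K"
      by (induction K) auto
    finally have "(\<Sum>k<Suc K. if z < (1/2)^k then (2::real)^k else 0) \<le> 2 * 2^K"
      using True by simp
    also have "\<dots> \<le> 2 / z"
      using True z by (simp add: field_simps power_one_over)
    finally show ?thesis .
  qed (use Suc in simp)
qed (use z in simp)

lemma dyadic_sum_le_inverse:
  fixes z :: real
  shows "(\<Sum>k<K. if z < (1/2)^k then (2::ennreal)^k else 0) \<le> 2 * inverse (ennreal z)"
proof (cases "0 < z")
  case True
  have "(\<Sum>k<K. if z < (1/2)^k then (2::ennreal)^k else 0)
      = (\<Sum>k<K. ennreal (if z < (1/2)^k then 2^k else 0))"
    by (intro sum.cong refl) (simp add: ennreal_power[symmetric])
  also have "\<dots> = ennreal (\<Sum>k<K. if z < (1/2)^k then 2^k else 0)"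
    by (rule sum_ennreal) auto
  also have "\<dots> \<le> ennreal (2 / z)"
    by (intro ennreal_leI dyadic_sum_le True)
  also have "\<dots> = 2 * inverse (ennreal z)"
    using True by (simp add: divide_inverse ennreal_mult inverse_ennreal)
  finally show ?thesis .
qed (simp add: ennreal_neg)

lemma nn_integral_dyadic_sum_ge:
  assumes M: "finite_measure M" and W: "W \<in> borel_measurable M" and c: "0 \<le> c"
    and small: "\<And>\<epsilon>. 0 < \<epsilon> \<Longrightarrow> \<epsilon> \<le> 1 \<Longrightarrow> c * \<epsilon> \<le> measure M {\<omega> \<in> space M. W \<omega> < \<epsilon>}"
  shows "ennreal (c * real K) \<le> (\<integral>\<^sup>+\<omega>. (\<Sum>k<K. if W \<omega> < (1/2)^k then (2::ennreal)^k else 0) \<partial>M)"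
proof -
  interpret finite_measure M by fact
  define E where "E k = {\<omega> \<in> space M. W \<omega> < (1/2)^k}" for k :: nat
  have E: "E k \<in> sets M" for k
    unfolding E_def using W by measurable
  have "ennreal c \<le> (2::ennreal)^k * emeasure M (E k)" for k
  proof -
    have "c * (1/2)^k \<le> measure M (E k)"
      unfolding E_def by (rule small) (auto simp: power_le_one)
    then have "ennreal (2^k * (c * (1/2)^k)) \<le> ennreal (2^k * measure M (E k))"
      by (intro ennreal_leI mult_left_mono) auto
    moreover have "2^k * (c * (1/2)^k) = c"
      by (simp add: power_one_over)
    moreover have "ennreal (2^k * measure M (E k)) = 2^k * emeasure M (E k)"
      by (simp add: emeasure_eq_measure ennreal_mult ennreal_power[symmetric])
    ultimately show ?thesis
      by simp
  qed
  then have "(\<Sum>k<K. ennreal c) \<le> (\<Sum>k<K. (2::ennreal)^k * emeasure M (E k))"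
    by (intro sum_mono)
  also have "\<dots> = (\<Sum>k<K. \<integral>\<^sup>+\<omega>. (2::ennreal)^k * indicator (E k) \<omega> \<partial>M)"
    using E by (simp add: nn_integral_cmult_indicator)
  also have "\<dots> = (\<integral>\<^sup>+\<omega>. (\<Sum>k<K. (2::ennreal)^k * indicator (E k) \<omega>) \<partial>M)"
    by (rule nn_integral_sum[symmetric]) (use E in measurable)
  also have "\<dots> = (\<integral>\<^sup>+\<omega>. (\<Sum>k<K. if W \<omega> < (1/2)^k then (2::ennreal)^k else 0) \<partial>M)"
    by (intro nn_integral_cong sum.cong refl) (simp add: E_def indicator_def)
  finally show ?thesis
    using c by (simp add: ennreal_mult' ennreal_of_nat_eq_real_of_nat mult.commute)
qed

lemma nn_integral_inverse_eq_infinity_if_linear_lower_bound: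
  assumes M: "finite_measure M" and W: "W \<in> borel_measurable M" and c: "0 < c"
    and small: "\<And>\<epsilon>. 0 < \<epsilon> \<Longrightarrow> \<epsilon> \<le> 1 \<Longrightarrow> c * \<epsilon> \<le> measure M {\<omega> \<in> space M. W \<omega> < \<epsilon>}"
  shows "(\<integral>\<^sup>+\<omega>. inverse (ennreal (W \<omega>)) \<partial>M) = \<infinity>"
proof (rule ccontr)
  define I where "I = (\<integral>\<^sup>+\<omega>. inverse (ennreal (W \<omega>)) \<partial>M)"
  have lower: "ennreal (c * real K) \<le> 2 * I" for K
  proof -
    have "ennreal (c * real K) \<le> (\<integral>\<^sup>+\<omega>. (\<Sum>k<K. if W \<omega> < (1/2)^k then (2::ennreal)^k else 0) \<partial>M)"
      using nn_integral_dyadic_sum_ge[OF M W _ small] c by simp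
    also have "\<dots> \<le> (\<integral>\<^sup>+\<omega>. 2 * inverse (ennreal (W \<omega>)) \<partial>M)"
      by (intro nn_integral_mono dyadic_sum_le_inverse)
    also have "\<dots> = 2 * I"
      unfolding I_def using W by (simp add: nn_integral_cmult)
    finally show ?thesis .
  qed
  assume "(\<integral>\<^sup>+\<omega>. inverse (ennreal (W \<omega>)) \<partial>M) \<noteq> \<infinity>"
  then obtain r where r: "I = ennreal r" "0 \<le> r"
    unfolding I_def using ennreal_cases[of "\<integral>\<^sup>+\<omega>. inverse (ennreal (W \<omega>)) \<partial>M"] by auto
  obtain K :: nat where K: "2 * r / c < K"
    using reals_Archimedean2 by blast
  have "ennreal (c * real K) \<le> ennreal (2 * r)"
    using lower[of K] r by (simp add: ennreal_mult)
  then have "c * real K \<le> 2 * r"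
    using r by (simp add: ennreal_le_iff)
  then show False
    using K c by (simp add: field_simps)
qed

theorem mainTheorem3:
  fixes M :: "'a measure" and n :: nat and X :: "nat \<Rightarrow> 'a \<Rightarrow> (nat \<Rightarrow> real)"
  assumes "prob_space M"
    and "n \<ge> 2"
    and rv: "\<And>i. i < n \<Longrightarrow> X i \<in> measurable M (PiM {..<n} (\<lambda>_. borel))"
    and indep: "prob_space.indep_vars M (\<lambda>_. PiM {..<n} (\<lambda>_. borel)) X {..<n}"
    and ident: "\<And>i. i < n \<Longrightarrow>
        distr M (PiM {..<n} (\<lambda>_. borel)) (X i) = distr M (PiM {..<n} (\<lambda>_. borel)) (X 0)"
    and linind: "AE \<omega> in M. lin_indep_vecs n (n - 1) (\<lambda>i. X i \<omega>)"
  defines "Y \<equiv> (\<lambda>\<omega> j. gen_cross n (\<lambda>i. X i \<omega>) j / supnorm n (gen_cross n (\<lambda>i. X i \<omega>)))"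
  shows "Liminf (at_right 0)
           (\<lambda>\<epsilon>::real. ereal (measure M {\<omega> \<in> space M. \<bar>vdot n (X (n - 1) \<omega>) (Y \<omega>)\<bar> < \<epsilon>} / \<epsilon>)) > 0 \<and>
         (\<integral>\<^sup>+ \<omega>. inverse (ennreal \<bar>vdot n (X (n - 1) \<omega>) (Y \<omega>)\<bar>) \<partial>M) = \<infinity>"
proof -
  interpret prob_space M by fact
  define Z where "Z \<omega> = \<bar>dot_last_normal n (\<lambda>i. X i \<omega>)\<bar>" for \<omega>
  have Z_eq: "\<bar>vdot n (X (n - 1) \<omega>) (Y \<omega>)\<bar> = Z \<omega>" for \<omega>
    unfolding Z_def Y_def dot_last_normal_def by simp
  have Z: "Z \<in> borel_measurable M"
    unfolding Z_def by (intro borel_measurable_abs dot_last_normal_random_variable rv) (use \<open>n \<ge> 2\<close> in auto)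
  obtain c where c: "0 < c"
    and bound: "\<And>\<epsilon>. 0 < \<epsilon> \<Longrightarrow> \<epsilon> \<le> 1 \<Longrightarrow> c * \<epsilon> \<le> measure M {\<omega> \<in> space M. Z \<omega> < \<epsilon>}"
    using iid_linear_small_ball_bound[OF \<open>n \<ge> 2\<close> rv indep ident] unfolding Z_def by blast
  have "0 < Liminf (at_right 0) (\<lambda>\<epsilon>. ereal (measure M {\<omega> \<in> space M. Z \<omega> < \<epsilon>} / \<epsilon>))"
    by (rule Liminf_at_right_0_pos_if_linear_lower_bound[OF c]) (auto intro: bound)
  moreover have "(\<integral>\<^sup>+\<omega>. inverse (ennreal (Z \<omega>)) \<partial>M) = \<infinity>"
    by (rule nn_integral_inverse_eq_infinity_if_linear_lower_bound[OF finite_measure Z c bound])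
  ultimately show ?thesis
    unfolding Z_eq by simp
qed

end
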